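(* Let $p\in[1,\infty)$ and $\zeta\in M_p^{n-1}$. If $u_k,u\in\mathrm{Conv}_{\mathrm{coe}}^{(n)}(\mathbb{R}^n)$ are such that $\delta_{\zeta,p}(u_k,u)\to 0$, then $u_k(x_0)\to+\infty$ as $k\to\infty$ for every $x_0\in\mathrm{int}(\mathbb{R}^n\setminus\mathrm{dom}\,u)$.
   Context: $\mathrm{Conv}_{\mathrm{coe}}^{(n)}(\mathbb{R}^n)$ is the set of proper, lower semicontinuous, convex, coercive $u:\mathbb{R}^n\to\mathbb{R}\cup\{+\infty\}$ with $\mathrm{dom}\,u=\{u<+\infty\}$ of dimension $n$. $M_p^{n-1}$ is the set of continuous, strictly decreasing $\zeta:\mathbb{R}\to(0,\infty)$ with $\int_0^\infty\zeta(t)^pt^{n-1}dt<\infty$. $\delta_{\zeta,p}(u,v)=\left(\int_{\mathbb{R}^n}|\zeta(u(x))-\zeta(v(x))|^pdx\right)^{1/p}$ with $\zeta(+\infty):=0$. *)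

theory Defs
  imports "HOL-Analysis.Analysis"
begin

text \<open>Extended-real valued functions on a Euclidean space 'a (dimension n = DIM('a)).\<close>

definition edom :: "('a \<Rightarrow> ereal) \<Rightarrow> 'a set" where
  "edom u = {x. u x < \<infinity>}"

definition proper_fun :: "('a \<Rightarrow> ereal) \<Rightarrow> bool" where
  "proper_fun u \<longleftrightarrow> (\<forall>x. u x \<noteq> -\<infinity>) \<and> (\<exists>x. u x < \<infinity>)"

definition lsc_fun :: "('a::topological_space \<Rightarrow> ereal) \<Rightarrow> bool" where
  "lsc_fun u \<longleftrightarrow> (\<forall>c::ereal. closed {x. u x \<le> c})"

definition convex_fun :: "('a::real_vector \<Rightarrow> ereal) \<Rightarrow> bool" where
  "convex_fun u \<longleftrightarrow> (\<forall>x y t. 0 \<le> t \<and> t \<le> 1 \<longrightarrow>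
      u ((1 - t) *\<^sub>R x + t *\<^sub>R y) \<le> ereal (1 - t) * u x + ereal t * u y)"

definition coercive_fun :: "('a::real_normed_vector \<Rightarrow> ereal) \<Rightarrow> bool" where
  "coercive_fun u \<longleftrightarrow> (u \<longlongrightarrow> \<infinity>) at_infinity"

definition Conv_coe :: "('a::euclidean_space \<Rightarrow> ereal) set" where
  "Conv_coe = {u. proper_fun u \<and> lsc_fun u \<and> convex_fun u \<and> coercive_fun u
                  \<and> aff_dim (edom u) = int DIM('a)}"

definition M_p :: "real \<Rightarrow> nat \<Rightarrow> (real \<Rightarrow> real) set" where
  "M_p p m = {\<zeta>. continuous_on UNIV \<zeta> \<and> (\<forall>s t. s < t \<longrightarrow> \<zeta> t < \<zeta> s) \<and> (\<forall>t. \<zeta> t > 0)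
      \<and> (\<integral>\<^sup>+ t. ennreal (indicator {0..} t * (\<zeta> t powr p * t ^ m)) \<partial>lborel) < \<infinity>}"

definition zeta_ext :: "(real \<Rightarrow> real) \<Rightarrow> ereal \<Rightarrow> real" where
  "zeta_ext \<zeta> a = (if a = \<infinity> then 0 else \<zeta> (real_of_ereal a))"

definition delta_zeta :: "(real \<Rightarrow> real) \<Rightarrow> real \<Rightarrow> ('a::euclidean_space \<Rightarrow> ereal)
      \<Rightarrow> ('a \<Rightarrow> ereal) \<Rightarrow> ennreal" where
  "delta_zeta \<zeta> p u v =
     (let I = (\<integral>\<^sup>+ x. ennreal (\<bar>zeta_ext \<zeta> (u x) - zeta_ext \<zeta> (v x)\<bar> powr p) \<partial>lborel)
      in if I = \<infinity> then \<infinity> else ennreal (enn2real I powr (1 / p)))"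

end

theory Submission
  imports Defs
begin

text \<open>Since \<open>dom u\<close> has interior, \<open>u \<le> M\<close> on a compact set \<open>S \<subseteq> dom u\<close> of positive
  measure, while \<open>u = \<infinity>\<close> on a ball around \<open>x\<^sub>0\<close>. Suppose \<open>v(x\<^sub>0) \<le> C\<close> for a convex \<open>v\<close>.
  Where \<open>v > M + 1\<close> on \<open>S\<close>, the values of \<open>\<zeta> \<circ> v\<close> and \<open>\<zeta> \<circ> u\<close> differ by at least
  \<open>\<zeta>(M) - \<zeta>(M + 1)\<close>. On the rest \<open>A\<close> of \<open>S\<close>, convexity bounds \<open>v\<close> by
  \<open>(1 - \<epsilon>) C + \<epsilon> (M + 1)\<close> on the shrunken copy \<open>\<epsilon> A + (1 - \<epsilon>) x\<^sub>0\<close>, which lies in the ball,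
  where \<open>\<zeta> \<circ> u = 0\<close>. Either way \<open>\<delta>(v, u)\<close> is bounded below by a positive constant depending
  only on \<open>C\<close>, so \<open>\<delta>(u\<^sub>k, u) \<rightarrow> 0\<close> forces \<open>u\<^sub>k(x\<^sub>0) \<rightarrow> \<infinity>\<close>.\<close>

lemma convex_edom:
  assumes cf: "convex_fun u" and nm: "\<And>x. u x \<noteq> -\<infinity>"
  shows "convex (edom u)"
  unfolding convex_alt edom_def
proof safe
  fix x y and t :: real
  assume h: "u x < \<infinity>" "u y < \<infinity>" "0 \<le> t" "t \<le> 1"
  obtain a b where ab: "u x = ereal a" "u y = ereal b"
    using h nm by (cases "u x"; cases "u y") auto
  have "u ((1 - t) *\<^sub>R x + t *\<^sub>R y) \<le> ereal (1 - t) * u x + ereal t * u y"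
    using cf h unfolding convex_fun_def by blast
  also have "\<dots> = ereal ((1 - t) * a + t * b)"
    using ab by simp
  finally show "u ((1 - t) *\<^sub>R x + t *\<^sub>R y) < \<infinity>"
    by (rule order.strict_trans1) simp
qed

lemma interior_edom_nonempty:
  assumes "u \<in> Conv_coe"
  shows "interior (edom u) \<noteq> {}"
proof -
  have pr: "proper_fun u" and cf: "convex_fun u" and ad: "aff_dim (edom u) = int DIM('a)"
    using assms unfolding Conv_coe_def by auto
  have "convex (edom u)"
    using pr cf convex_edom unfolding proper_fun_def by blast
  moreover have "edom u \<noteq> {}"
    using pr unfolding proper_fun_def edom_def by auto
  moreover have "affine hull (edom u) = UNIV"
    using ad aff_dim_eq_full by blast
  ultimately show ?thesis
    using rel_interior_interior rel_interior_eq_empty by metis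
qed

lemma compact_sublevel_in_edom_positive_measure:
  fixes u :: "'a::euclidean_space \<Rightarrow> ereal"
  assumes ls: "lsc_fun u" and nm: "\<And>x. u x \<noteq> -\<infinity>" and int: "interior (edom u) \<noteq> {}"
  obtains S M where "compact S" "S \<subseteq> edom u" "\<And>x. x \<in> S \<Longrightarrow> u x \<le> ereal M"
    "emeasure lborel S > 0"
proof -
  obtain y s where s: "s > 0" "cball y s \<subseteq> edom u"
    using int by (meson ex_in_conv open_contains_cball open_interior interior_subset subset_trans)
  define B where "B n = cball y s \<inter> {x. u x \<le> ereal (real n)}" for n :: nat
  have closed_sublevel: "closed {x. u x \<le> ereal (real n)}" for n
    using ls unfolding lsc_fun_def by blast
  have "incseq B"
    unfolding B_def incseq_def by (auto intro: order_trans)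
  moreover have "range B \<subseteq> sets lborel"
    unfolding B_def using closed_sublevel by (auto intro!: borel_closed closed_Int)
  moreover have "\<Union> (range B) = cball y s"
  proof safe
    fix x assume x: "x \<in> cball y s"
    then obtain a where a: "u x = ereal a"
      using s nm[of x] unfolding edom_def by (cases "u x") auto
    obtain n :: nat where "a \<le> real n"
      using real_arch_simple by blast
    then show "x \<in> \<Union> (range B)"
      using x a unfolding B_def by auto
  qed (auto simp: B_def)
  ultimately have "(SUP n. emeasure lborel (B n)) = emeasure lborel (cball y s)"
    using SUP_emeasure_incseq by metis
  moreover have "emeasure lborel (cball y s) > 0"
    using emeasure_cball[of s y] s by simp
  ultimately obtain n where n: "emeasure lborel (B n) > 0"
    by (metis SUP_bot_conv(2) bot_ennreal not_gr_zero)
  show thesis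
  proof
    show "compact (B n)"
      unfolding B_def using closed_sublevel by (simp add: compact_Int_closed)
  qed (use s n in \<open>auto simp: B_def\<close>)
qed

lemma convex_fun_le_convex_combination:
  assumes "convex_fun v" "\<And>z. v z \<noteq> -\<infinity>" "0 \<le> t" "t \<le> 1"
    and "v x \<le> ereal a" "v y \<le> ereal b"
  shows "v ((1 - t) *\<^sub>R x + t *\<^sub>R y) \<le> ereal ((1 - t) * a + t * b)"
proof -
  obtain a' b' where a': "v x = ereal a'" "a' \<le> a" and b': "v y = ereal b'" "b' \<le> b"
    using assms(2,5,6)[unfolded atomize_all] by (cases "v x"; cases "v y") auto
  have "v ((1 - t) *\<^sub>R x + t *\<^sub>R y) \<le> ereal (1 - t) * v x + ereal t * v y"
    using assms(1,3,4) unfolding convex_fun_def by blast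
  also have "\<dots> = ereal ((1 - t) * a' + t * b')"
    using a' b' by simp
  also have "\<dots> \<le> ereal ((1 - t) * a + t * b)"
    using a' b' assms(3,4) by (simp add: add_mono mult_left_mono)
  finally show ?thesis .
qed

lemma zeta_ext_ge:
  assumes "\<And>s t. s < t \<Longrightarrow> \<zeta> t < \<zeta> s" "a \<le> ereal t" "a \<noteq> -\<infinity>"
  shows "\<zeta> t \<le> zeta_ext \<zeta> a"
  using assms by (cases a) (auto simp: zeta_ext_def order_le_less)

lemma zeta_ext_less:
  assumes "\<And>s t. s < t \<Longrightarrow> \<zeta> t < \<zeta> s" "\<And>t. 0 < \<zeta> t" "ereal t < a"
  shows "zeta_ext \<zeta> a < \<zeta> t"
  using assms by (cases a) (auto simp: zeta_ext_def)

lemma emeasure_lborel_affine_image: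
  fixes A :: "'a::euclidean_space set"
  assumes "compact A"
  shows "emeasure lborel ((\<lambda>x. c *\<^sub>R x + d) ` A) = ennreal (\<bar>c\<bar> ^ DIM('a)) * emeasure lborel A"
proof -
  have "compact ((\<lambda>x. c *\<^sub>R x + d) ` A)"
    using assms by (intro compact_continuous_image) (auto intro!: continuous_intros)
  then show ?thesis
    using emeasure_lebesgue_affine[of c d A] assms by (simp add: borel_compact)
qed

lemma nn_integral_ge_on_disjoint_sets:
  fixes f :: "'a \<Rightarrow> ennreal"
  assumes "P \<in> sets M" "Q \<in> sets M" "P \<inter> Q = {}"
    and "\<And>x. x \<in> P \<Longrightarrow> a \<le> f x" "\<And>x. x \<in> Q \<Longrightarrow> b \<le> f x"
  shows "a * emeasure M P + b * emeasure M Q \<le> (\<integral>\<^sup>+ x. f x \<partial>M)"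
proof -
  have "a * emeasure M P + b * emeasure M Q = (\<integral>\<^sup>+ x. a * indicator P x + b * indicator Q x \<partial>M)"
    using assms(1,2) by (simp add: nn_integral_add nn_integral_cmult_indicator)
  also have "\<dots> \<le> (\<integral>\<^sup>+ x. f x \<partial>M)"
    using assms(3-5) by (intro nn_integral_mono) (auto simp: indicator_def)
  finally show ?thesis .
qed

lemma homothety_into_ball:
  fixes x0 :: "'a::real_normed_vector"
  assumes "bounded S" "0 < r"
  obtains \<epsilon> where "0 < \<epsilon>" "\<epsilon> < 1" "\<And>a. a \<in> S \<Longrightarrow> \<epsilon> *\<^sub>R a + (1 - \<epsilon>) *\<^sub>R x0 \<in> ball x0 r"
proof -
  obtain D where D: "D > 0" "\<And>a. a \<in> S \<Longrightarrow> norm (a - x0) \<le> D"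
    using assms(1) bounded_pos bounded_translation_minus[of S x0]
    by (metis (no_types, lifting) imageI)
  define \<epsilon> where "\<epsilon> = r / (D + r)"
  have eps: "0 < \<epsilon>" "\<epsilon> < 1" "\<epsilon> * D < r"
    using D assms(2) unfolding \<epsilon>_def by (auto simp: field_simps)
  show thesis
  proof (rule that[OF eps(1,2)])
    fix a assume "a \<in> S"
    have "dist x0 (\<epsilon> *\<^sub>R a + (1 - \<epsilon>) *\<^sub>R x0) = \<epsilon> * norm (a - x0)"
      using eps by (simp add: dist_norm algebra_simps norm_minus_commute flip: scaleR_diff_right)
    also have "\<dots> \<le> \<epsilon> * D"
      using D(2)[OF \<open>a \<in> S\<close>] eps by simp
    finally show "\<epsilon> *\<^sub>R a + (1 - \<epsilon>) *\<^sub>R x0 \<in> ball x0 r"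
      using eps by simp
  qed
qed

lemma zeta_distance_integral_lower_bound:
  fixes u v :: "'a::euclidean_space \<Rightarrow> ereal"
  assumes dec: "\<And>s t. s < t \<Longrightarrow> \<zeta> t < \<zeta> s" and pos: "\<And>t. 0 < \<zeta> t" and "0 < p"
    and v: "convex_fun v" "\<And>c. closed {x. v x \<le> c}" "\<And>x. v x \<noteq> -\<infinity>" "v x0 \<le> ereal C"
    and u: "\<And>x. u x \<noteq> -\<infinity>"
    and S: "compact S" "S \<subseteq> edom u" "\<And>x. x \<in> S \<Longrightarrow> u x \<le> ereal M"
    and \<epsilon>: "0 < \<epsilon>" "\<epsilon> \<le> 1" "\<And>a. a \<in> S \<Longrightarrow> \<epsilon> *\<^sub>R a + (1 - \<epsilon>) *\<^sub>R x0 \<notin> edom u"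
  shows "ennreal (min ((\<zeta> M - \<zeta> (M + 1)) powr p)
      (\<zeta> ((1 - \<epsilon>) * C + \<epsilon> * (M + 1)) powr p * \<epsilon> ^ DIM('a)) * measure lborel S)
    \<le> (\<integral>\<^sup>+ x. ennreal (\<bar>zeta_ext \<zeta> (v x) - zeta_ext \<zeta> (u x)\<bar> powr p) \<partial>lborel)"
    (is "ennreal (min ?d ?l * _) \<le> (\<integral>\<^sup>+ x. ?f x \<partial>lborel)")
proof -
  define L where "L = (1 - \<epsilon>) * C + \<epsilon> * (M + 1)"
  define A where "A = S \<inter> {x. v x \<le> ereal (M + 1)}"
  define T where "T = (\<lambda>a. \<epsilon> *\<^sub>R a + (1 - \<epsilon>) *\<^sub>R x0) ` A"
  have A: "compact A" "A \<subseteq> S"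
    unfolding A_def using S(1) v(2) by (auto simp: compact_Int_closed)
  have T: "compact T" "T \<inter> edom u = {}"
    unfolding T_def using A \<epsilon>(3)
    by (auto intro!: compact_continuous_image continuous_intros)
  have gap: "?d \<le> ?f x" if "x \<in> S - A" for x
  proof -
    have "zeta_ext \<zeta> (v x) < \<zeta> (M + 1)"
      using that dec pos by (intro zeta_ext_less) (auto simp: A_def)
    moreover have "\<zeta> M \<le> zeta_ext \<zeta> (u x)"
      using that dec u S(3) by (intro zeta_ext_ge) auto
    ultimately show ?thesis
      using dec[of M "M + 1"] \<open>0 < p\<close> by (auto intro!: ennreal_leI powr_mono2)
  qed
  have far: "\<zeta> L powr p \<le> ?f x" if x: "x \<in> T" for x
  proof -
    obtain a where a: "a \<in> A" "x = (1 - \<epsilon>) *\<^sub>R x0 + \<epsilon> *\<^sub>R a"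
      using x add.commute unfolding T_def by blast
    have "v x \<le> ereal L"
      unfolding L_def a(2) using a(1) v \<epsilon>
      by (intro convex_fun_le_convex_combination) (auto simp: A_def)
    then have "\<zeta> L \<le> zeta_ext \<zeta> (v x)"
      using dec v(3) by (intro zeta_ext_ge)
    moreover have "zeta_ext \<zeta> (u x) = 0"
      using x T(2) unfolding edom_def zeta_ext_def by (auto simp: top.not_eq_extremum)
    ultimately show ?thesis
      using pos[of L] \<open>0 < p\<close> by (auto intro!: ennreal_leI powr_mono2)
  qed
  have sets: "S - A \<in> sets lborel" "A \<in> sets lborel" "T \<in> sets lborel"
    using S(1) A(1) T(1) by (auto simp: borel_compact)
  have "emeasure lborel (S - A) + emeasure lborel A = emeasure lborel ((S - A) \<union> A)"
    using sets by (intro plus_emeasure) auto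
  then have "emeasure lborel S = emeasure lborel (S - A) + emeasure lborel A"
    using A(2) by (simp add: Un_absorb2)
  moreover have "emeasure lborel S = ennreal (measure lborel S)"
    using emeasure_bounded_finite[OF compact_imp_bounded[OF S(1)]]
    by (simp add: emeasure_eq_ennreal_measure)
  ultimately have "ennreal (min ?d ?l * measure lborel S)
      = ennreal (min ?d ?l) * emeasure lborel (S - A) + ennreal (min ?d ?l) * emeasure lborel A"
    using \<epsilon>(1) by (simp add: ennreal_mult' distrib_left)
  also have "\<dots> \<le> ennreal ?d * emeasure lborel (S - A) + ennreal ?l * emeasure lborel A"
    by (intro add_mono mult_right_mono ennreal_leI) auto
  also have "\<dots> = ennreal ?d * emeasure lborel (S - A) + ennreal (\<zeta> L powr p) * emeasure lborel T"
    using \<epsilon>(1) unfolding T_def L_def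
    by (simp add: emeasure_lborel_affine_image[OF A(1)] ennreal_mult' mult.assoc)
  also have "\<dots> \<le> (\<integral>\<^sup>+ x. ?f x \<partial>lborel)"
    using sets T(2) S(2) gap far by (intro nn_integral_ge_on_disjoint_sets) auto
  finally show ?thesis .
qed

lemma delta_zeta_ge_root:
  assumes "0 < p" "0 \<le> K"
    and "ennreal K \<le> (\<integral>\<^sup>+ x. ennreal (\<bar>zeta_ext \<zeta> (u x) - zeta_ext \<zeta> (v x)\<bar> powr p) \<partial>lborel)"
      (is "_ \<le> ?I")
  shows "ennreal (K powr (1 / p)) \<le> delta_zeta \<zeta> p u v"
proof (cases "?I = \<infinity>")
  case False
  then have "K \<le> enn2real ?I"
    using enn2real_mono[OF assms(3)] assms(2) by (simp add: top.not_eq_extremum)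
  then have "K powr (1 / p) \<le> enn2real ?I powr (1 / p)"
    using assms(1,2) by (intro powr_mono2) auto
  then show ?thesis
    using False unfolding delta_zeta_def Let_def by (simp add: ennreal_leI)
qed (simp add: delta_zeta_def)

lemma delta_zeta_bounded_below_if_bounded_at:
  fixes u :: "'a::euclidean_space \<Rightarrow> ereal"
  assumes dec: "\<And>s t. s < t \<Longrightarrow> \<zeta> t < \<zeta> s" and pos: "\<And>t. 0 < \<zeta> t" and "0 < p"
    and u: "u \<in> Conv_coe" and x0: "x0 \<in> interior (UNIV - edom u)"
  shows "\<exists>K>0. \<forall>v\<in>Conv_coe. v x0 \<le> ereal C \<longrightarrow> ennreal K \<le> delta_zeta \<zeta> p v u"
proof -
  have u_props: "lsc_fun u" "\<And>x. u x \<noteq> -\<infinity>"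
    using u unfolding Conv_coe_def proper_fun_def by auto
  obtain S M where S: "compact S" "S \<subseteq> edom u" "\<And>x. x \<in> S \<Longrightarrow> u x \<le> ereal M"
    "emeasure lborel S > 0"
    using compact_sublevel_in_edom_positive_measure[OF u_props interior_edom_nonempty[OF u]]
    by metis
  obtain r where r: "0 < r" "ball x0 r \<subseteq> UNIV - edom u"
    using x0 mem_interior by blast
  obtain \<epsilon> where \<epsilon>: "0 < \<epsilon>" "\<epsilon> < 1" "\<And>a. a \<in> S \<Longrightarrow> \<epsilon> *\<^sub>R a + (1 - \<epsilon>) *\<^sub>R x0 \<in> ball x0 r"
    using homothety_into_ball[OF compact_imp_bounded[OF S(1)] r(1)] by metis
  define K where "K = min ((\<zeta> M - \<zeta> (M + 1)) powr p)
      (\<zeta> ((1 - \<epsilon>) * C + \<epsilon> * (M + 1)) powr p * \<epsilon> ^ DIM('a)) * measure lborel S"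
  have "measure lborel S > 0"
    using S(4) emeasure_bounded_finite[OF compact_imp_bounded[OF S(1)]]
    by (simp add: emeasure_eq_ennreal_measure)
  then have K: "0 < K"
    unfolding K_def using dec[of M "M + 1"] pos[of "(1 - \<epsilon>) * C + \<epsilon> * (M + 1)"] \<epsilon>(1) by simp
  show ?thesis
  proof (intro exI[of _ "K powr (1 / p)"] conjI ballI impI)
    show "0 < K powr (1 / p)"
      using K by simp
  next
    fix v assume v: "v \<in> Conv_coe" "v x0 \<le> ereal C"
    have v_props: "convex_fun v" "\<And>c. closed {x. v x \<le> c}" "\<And>x. v x \<noteq> -\<infinity>"
      using v(1) unfolding Conv_coe_def proper_fun_def lsc_fun_def by auto
    have "ennreal K \<le> (\<integral>\<^sup>+ x. ennreal (\<bar>zeta_ext \<zeta> (v x) - zeta_ext \<zeta> (u x)\<bar> powr p) \<partial>lborel)"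
      unfolding K_def
    proof (rule zeta_distance_integral_lower_bound[OF dec pos \<open>0 < p\<close> v_props v(2) u_props(2) S(1-3)])
      show "\<epsilon> *\<^sub>R a + (1 - \<epsilon>) *\<^sub>R x0 \<notin> edom u" if "a \<in> S" for a
        using \<epsilon>(3)[OF that] r(2) by blast
    qed (use \<epsilon> in auto)
    then show "ennreal (K powr (1 / p)) \<le> delta_zeta \<zeta> p v u"
      using delta_zeta_ge_root[OF \<open>0 < p\<close> less_imp_le[OF K]] by blast
  qed
qed

theorem lemma3p9:
  fixes p :: real and \<zeta> :: "real \<Rightarrow> real"
    and uk :: "nat \<Rightarrow> 'a::euclidean_space \<Rightarrow> ereal" and u :: "'a \<Rightarrow> ereal"
  assumes "1 \<le> p"
    and "\<zeta> \<in> M_p p (DIM('a) - 1)"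
    and "\<And>k. uk k \<in> Conv_coe"
    and "u \<in> Conv_coe"
    and "(\<lambda>k. delta_zeta \<zeta> p (uk k) u) \<longlonglongrightarrow> 0"
    and "x0 \<in> interior (UNIV - edom u)"
  shows "(\<lambda>k. uk k x0) \<longlonglongrightarrow> \<infinity>"
  unfolding tendsto_PInfty
proof
  fix C :: real
  have dec: "\<And>s t. s < t \<Longrightarrow> \<zeta> t < \<zeta> s" and pos: "\<And>t. 0 < \<zeta> t"
    using assms(2) unfolding M_p_def by auto
  have "0 < p"
    using assms(1) by simp
  obtain K where "0 < K" and K: "\<forall>v\<in>Conv_coe. v x0 \<le> ereal C \<longrightarrow> ennreal K \<le> delta_zeta \<zeta> p v u"
    using delta_zeta_bounded_below_if_bounded_at[where \<zeta> = \<zeta> and C = C, OF dec pos \<open>0 < p\<close> assms(4,6)]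
    by blast
  have "eventually (\<lambda>k. delta_zeta \<zeta> p (uk k) u < ennreal K) sequentially"
    using assms(5) \<open>0 < K\<close> by (intro order_tendstoD(2)) auto
  then show "eventually (\<lambda>k. ereal C < uk k x0) sequentially"
    by eventually_elim (use K assms(3) in \<open>meson leD not_le\<close>)
qed

end
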